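(* For every integer $k \ge 1$, the edge set of the hypercube $Q_{2k}$ can be partitioned into the edge sets of $k$ pairwise edge-disjoint spanning trees of $Q_{2k}$ together with a matching consisting of exactly $k$ edges.
   Context: The $n$-dimensional hypercube $Q_n$ is the graph whose vertices are all binary vectors of length $n$, with two vertices adjacent if and only if they differ in exactly one coordinate. A matching is a set of pairwise vertex-disjoint edges. *)

theory Defs
  imports Main
begin

definition hc_verts :: "nat \<Rightarrow> bool list set" where
  "hc_verts n = {v. length v = n}"

definition hc_adj :: "bool list \<Rightarrow> bool list \<Rightarrow> bool" where
  "hc_adj u v \<longleftrightarrow> length u = length v \<and> card {i. i < length u \<and> u ! i \<noteq> v ! i} = 1"

definition hc_edges :: "nat \<Rightarrow> bool list set set" where
  "hc_edges n = {{u, v} | u v. u \<in> hc_verts n \<and> v \<in> hc_verts n \<and> hc_adj u v}"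

definition walk :: "'a set set \<Rightarrow> 'a list \<Rightarrow> bool" where
  "walk E p \<longleftrightarrow> p \<noteq> [] \<and> (\<forall>i. Suc i < length p \<longrightarrow> {p ! i, p ! Suc i} \<in> E)"

definition connected_on :: "'a set \<Rightarrow> 'a set set \<Rightarrow> bool" where
  "connected_on V E \<longleftrightarrow> (\<forall>u\<in>V. \<forall>v\<in>V. \<exists>p. walk E p \<and> hd p = u \<and> last p = v)"

definition has_cycle :: "'a set set \<Rightarrow> bool" where
  "has_cycle E \<longleftrightarrow> (\<exists>p. length p \<ge> 3 \<and> distinct p \<and> walk E p \<and> {last p, hd p} \<in> E)"

definition spanning_tree :: "'a set \<Rightarrow> 'a set set \<Rightarrow> 'a set set \<Rightarrow> bool" where
  "spanning_tree V E T \<longleftrightarrow> T \<subseteq> E \<and> connected_on V T \<and> \<not> has_cycle T"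

definition matching :: "'a set set \<Rightarrow> 'a set set \<Rightarrow> bool" where
  "matching E M \<longleftrightarrow> M \<subseteq> E \<and> (\<forall>e\<in>M. \<forall>f\<in>M. e \<noteq> f \<longrightarrow> e \<inter> f = {})"

end

theory Submission
  imports Defs
begin

text \<open>Cutting the 2k coordinates into pairs and reading each pair as a Gray code of an element
  of Z/4 identifies Q_{2k} with the product of k four-cycles, whose edges are the darts (f, i)
  joining f to f + e_i. For a dart (f, i), follow the carry chain f(x + 1) = f(x) + [x = k - 1]
  (mod 4) from x = i cyclically through the k - 1 steps up to i - 1. If it first fails at the
  step leaving j, the dart goes to tree j. If it never fails, f is determined by f(i), and the
  dart goes to tree i - 1 unless f(i) is 0 or 2 according to the parity of i, in which case it
  goes to the matching; this gives one matching dart per direction, and these k edges are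
  vertex-disjoint. Each tree class is a spanning tree because, unfolded one coordinate
  j, j - 1, ..., j + 1 at a time, it is built by repeatedly extending a spanning tree of a
  product of four-cycles to one more factor: a spanning path in every fibre four-cycle plus one
  lifted copy of each old tree edge. Trees are certified by parent maps decreasing a height.\<close>

section \<open>Spanning trees from parent maps\<close>

lemma walk_singleton: "walk E [x]"
  by (simp add: walk_def)

lemma walk_Cons_Cons: "walk E (x # y # p) \<longleftrightarrow> {x, y} \<in> E \<and> walk E (y # p)"
  unfolding walk_def by (auto simp: nth_Cons' less_Suc_eq_0_disj)

lemma walk_if_rtranclp:
  assumes "(\<lambda>x y. {x, y} \<in> E)\<^sup>*\<^sup>* u v"
  shows "\<exists>p. walk E p \<and> hd p = u \<and> last p = v"
  using assms
proof (induction rule: converse_rtranclp_induct)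
  case base
  show ?case using walk_singleton by force
next
  case (step u y)
  then obtain p where p: "walk E p" "hd p = y" "last p = v" by blast
  then obtain q where "p = y # q" by (cases p) (auto simp: walk_def)
  then show ?case using step.hyps(1) p by (intro exI[of _ "u # p"]) (simp add: walk_Cons_Cons)
qed

lemma cycle_vertex_two_neighbours:
  assumes p: "length p \<ge> 3" "distinct p" "walk E p" "{last p, hd p} \<in> E" and x: "x \<in> set p"
  shows "\<exists>y\<in>set p. \<exists>z\<in>set p. y \<noteq> z \<and> {x, y} \<in> E \<and> {x, z} \<in> E"
proof -
  define n where "n = length p"
  obtain i where i: "i < n" "p ! i = x" using x by (auto simp: n_def in_set_conv_nth)
  have edge: "{p ! m, p ! Suc m} \<in> E" if "Suc m < n" for m
    using p(3) that by (simp add: walk_def n_def)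
  have ne: "p \<noteq> []" using p(1) by auto
  then have hd: "hd p = p ! 0" and last: "last p = p ! (n - 1)"
    by (simp_all add: n_def hd_conv_nth last_conv_nth)
  have nth_neq: "p ! a \<noteq> p ! b" if "a < n" "b < n" "a \<noteq> b" for a b
    using p(2) that by (simp add: n_def nth_eq_iff_index_eq)
  have mem: "p ! a \<in> set p" if "a < n" for a using that by (simp add: n_def)
  have two: "\<exists>y\<in>set p. \<exists>z\<in>set p. y \<noteq> z \<and> {x, y} \<in> E \<and> {x, z} \<in> E"
    if "a < n" "b < n" "a \<noteq> b" "{x, p ! a} \<in> E" "{x, p ! b} \<in> E" for a b
    using that mem nth_neq by blast
  consider "i = 0" | "0 < i" "i < n - 1" | "i = n - 1" using i(1) by linarith
  then show ?thesis
  proof cases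
    case 1
    then show ?thesis
      using two[of 1 "n - 1"] edge[of 0] p(1,4) i hd last by (simp add: n_def insert_commute)
  next
    case 2
    then show ?thesis
      using two[of "i - 1" "Suc i"] edge[of "i - 1"] edge[of i] i by (simp add: insert_commute)
  next
    case 3
    moreover have "Suc (n - 2) = n - 1" using p(1) by (simp add: n_def)
    ultimately show ?thesis
      using two[of "n - 2" 0] edge[of "n - 2"] p(1,4) i hd last ne by (simp add: n_def insert_commute)
  qed
qed

definition parent_tree :: "'a set \<Rightarrow> 'a set set \<Rightarrow> bool" where
  "parent_tree V T \<longleftrightarrow> (\<exists>P r (h :: 'a \<Rightarrow> nat). r \<in> V
      \<and> (\<forall>v\<in>V. v \<noteq> r \<longrightarrow> P v \<in> V \<and> h (P v) < h v)
      \<and> T = {{v, P v} | v. v \<in> V \<and> v \<noteq> r})"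

context
  fixes V :: "'a set" and P :: "'a \<Rightarrow> 'a" and r :: 'a and h :: "'a \<Rightarrow> nat"
  assumes parent: "\<And>v. v \<in> V \<Longrightarrow> v \<noteq> r \<Longrightarrow> P v \<in> V \<and> h (P v) < h v"
begin

lemma connected_on_parent_edges:
  assumes r: "r \<in> V" shows "connected_on V {{v, P v} | v. v \<in> V \<and> v \<noteq> r}"
proof -
  define T where "T = {{v, P v} | v. v \<in> V \<and> v \<noteq> r}"
  let ?R = "(\<lambda>x y. {x, y} \<in> T)\<^sup>*\<^sup>*"
  have to_root: "?R v r" if "v \<in> V" for v
    using that
  proof (induction "h v" arbitrary: v rule: less_induct)
    case less
    show ?case
    proof (cases "v = r")
      case False
      then have "{v, P v} \<in> T" and "?R (P v) r" using less parent unfolding T_def by blast+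
      then show ?thesis by (simp add: converse_rtranclp_into_rtranclp)
    qed simp
  qed
  have "symp (\<lambda>x y. {x, y} \<in> T)" by (rule sympI) (simp add: insert_commute)
  then have "symp ?R" by (rule symp_rtranclp)
  then have "?R u v" if "u \<in> V" "v \<in> V" for u v
    using to_root that by (meson rtranclp_trans sympD)
  then show ?thesis
    unfolding connected_on_def T_def[symmetric] by (intro ballI walk_if_rtranclp)
qed

lemma no_cycle_parent_edges: "\<not> has_cycle {{v, P v} | v. v \<in> V \<and> v \<noteq> r}"
proof
  define T where "T = {{v, P v} | v. v \<in> V \<and> v \<noteq> r}"
  assume "has_cycle {{v, P v} | v. v \<in> V \<and> v \<noteq> r}"
  then obtain p where p: "length p \<ge> 3" "distinct p" "walk T p" "{last p, hd p} \<in> T"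
    unfolding has_cycle_def T_def by blast
  have to_parent: "b = P a" if "{a, b} \<in> T" "h b \<le> h a" for a b
  proof -
    have "{a, b} \<in> {{v, P v} | v. v \<in> V \<and> v \<noteq> r}" using that(1) T_def by simp
    then obtain v where v: "{a, b} = {v, P v}" "v \<in> V" "v \<noteq> r" by blast
    then show ?thesis using parent[OF v(2,3)] that(2) by (auto simp: doubleton_eq_iff)
  qed
  have "finite (h ` set p)" "h ` set p \<noteq> {}" using p(1) by auto
  then obtain x where x: "x \<in> set p" "h x = Max (h ` set p)"
    using Max_in[of "h ` set p"] by (metis imageE)
  then have max: "h y \<le> h x" if "y \<in> set p" for y using that by simp
  \<comment> \<open>Both cycle neighbours of a vertex of maximal height would have to be its parent.\<close>
  obtain y z where "y \<in> set p" "z \<in> set p" "y \<noteq> z" "{x, y} \<in> T" "{x, z} \<in> T"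
    using cycle_vertex_two_neighbours[OF p x(1)] by blast
  then have "y = P x" "z = P x" using to_parent max by blast+
  then show False using \<open>y \<noteq> z\<close> by simp
qed

end

lemma spanning_tree_if_parent_tree:
  assumes "parent_tree V T" and "T \<subseteq> E"
  shows "spanning_tree V E T"
proof -
  obtain P r and h :: "'a \<Rightarrow> nat" where r: "r \<in> V"
    and P: "\<And>v. v \<in> V \<Longrightarrow> v \<noteq> r \<Longrightarrow> P v \<in> V \<and> h (P v) < h v"
    and T: "T = {{v, P v} | v. v \<in> V \<and> v \<noteq> r}"
    using assms(1) unfolding parent_tree_def by blast
  show ?thesis
    using assms(2) connected_on_parent_edges[OF P r] no_cycle_parent_edges[OF P]
    unfolding spanning_tree_def T by (intro conjI)
qed

lemma parent_tree_image:
  assumes "bij_betw \<phi> V W" and "parent_tree V T"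
  shows "parent_tree W ((`) \<phi> ` T)"
proof -
  obtain P r and h :: "'a \<Rightarrow> nat" where r: "r \<in> V"
    and P: "\<forall>v\<in>V. v \<noteq> r \<longrightarrow> P v \<in> V \<and> h (P v) < h v"
    and T: "T = {{v, P v} | v. v \<in> V \<and> v \<noteq> r}"
    using assms(2) unfolding parent_tree_def by blast
  define \<psi> where "\<psi> = inv_into V \<phi>"
  have \<psi>: "\<And>w. w \<in> W \<Longrightarrow> \<psi> w \<in> V \<and> \<phi> (\<psi> w) = w" "\<And>v. v \<in> V \<Longrightarrow> \<psi> (\<phi> v) = v"
    using assms(1) unfolding \<psi>_def
    by (auto simp: bij_betw_def inv_into_into f_inv_into_f inv_into_f_f)
  have \<phi>W: "\<phi> v \<in> W" if "v \<in> V" for v using assms(1) that by (auto simp: bij_betw_def)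
  define Q where "Q = \<phi> \<circ> P \<circ> \<psi>"
  have "(`) \<phi> ` T = {{w, Q w} | w. w \<in> W \<and> w \<noteq> \<phi> r}"
  proof (intro equalityI subsetI)
    fix e assume "e \<in> (`) \<phi> ` T"
    then obtain v where v: "v \<in> V" "v \<noteq> r" "e = {\<phi> v, \<phi> (P v)}" unfolding T by auto
    then have "\<phi> v \<noteq> \<phi> r" using \<psi>(2) r by metis
    moreover have "Q (\<phi> v) = \<phi> (P v)" using \<psi>(2)[OF v(1)] by (simp add: Q_def)
    ultimately show "e \<in> {{w, Q w} | w. w \<in> W \<and> w \<noteq> \<phi> r}" using v \<phi>W by auto
  next
    fix e assume "e \<in> {{w, Q w} | w. w \<in> W \<and> w \<noteq> \<phi> r}"
    then obtain w where w: "w \<in> W" "w \<noteq> \<phi> r" "e = {w, Q w}" by blast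
    then have "\<psi> w \<in> V" "\<psi> w \<noteq> r" "e = \<phi> ` {\<psi> w, P (\<psi> w)}" using \<psi>(1) by (auto simp: Q_def)
    then show "e \<in> (`) \<phi> ` T" unfolding T by blast
  qed
  moreover have "Q w \<in> W \<and> h (\<psi> (Q w)) < h (\<psi> w)" if "w \<in> W" "w \<noteq> \<phi> r" for w
  proof -
    have "\<psi> w \<in> V" "\<psi> w \<noteq> r" using \<psi>(1) that by metis+
    then show ?thesis using P \<phi>W \<psi>(2) by (simp add: Q_def)
  qed
  ultimately show ?thesis
    unfolding parent_tree_def using \<phi>W[OF r]
    by (intro exI[of _ Q] exI[of _ "\<phi> r"] exI[of _ "h \<circ> \<psi>"]) auto
qed

section \<open>The hypercube as a product of four-cycles\<close>

definition torus_on :: "nat set \<Rightarrow> (nat \<Rightarrow> nat) set" where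
  "torus_on C = {f. \<forall>i. (i \<in> C \<longrightarrow> f i < 4) \<and> (i \<notin> C \<longrightarrow> f i = 0)}"

definition rot :: "(nat \<Rightarrow> nat) \<Rightarrow> nat \<Rightarrow> nat \<Rightarrow> nat" where
  "rot f c = f(c := Suc (f c) mod 4)"

definition dart_edge :: "(nat \<Rightarrow> nat) \<times> nat \<Rightarrow> (nat \<Rightarrow> nat) set" where
  "dart_edge d = {fst d, rot (fst d) (snd d)}"

definition darts :: "nat \<Rightarrow> ((nat \<Rightarrow> nat) \<times> nat) set" where
  "darts k = torus_on {..<k} \<times> {..<k}"

lemma torus_on_less_4: "f \<in> torus_on C \<Longrightarrow> f i < 4"
  by (cases "i \<in> C") (auto simp: torus_on_def)

lemma torus_on_insert:
  "f \<in> torus_on (insert c C) \<longleftrightarrow> f(c := 0) \<in> torus_on (C - {c}) \<and> f c < 4"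
  by (auto simp: torus_on_def)

lemma rot_in_torus_on: "f \<in> torus_on C \<Longrightarrow> c \<in> C \<Longrightarrow> rot f c \<in> torus_on C"
  by (simp add: torus_on_def rot_def)

lemma rot_rot_neq:
  assumes "\<forall>i. f i < 4" shows "rot (rot f d) d' \<noteq> f"
proof
  assume e: "rot (rot f d) d' = f"
  show False
  proof (cases "d = d'")
    case True
    then have "Suc (Suc (f d) mod 4) mod 4 = f d" using e unfolding rot_def by (metis fun_upd_same)
    then show False using assms by presburger
  next
    case False
    then have "Suc (f d) mod 4 = f d" using fun_cong[OF e, of d] by (simp add: rot_def)
    then show False by presburger
  qed
qed

lemma dart_edge_inj: "inj_on dart_edge (darts k)"
proof (rule inj_onI)
  fix d1 d2 assume d: "d1 \<in> darts k" "d2 \<in> darts k" and e: "dart_edge d1 = dart_edge d2"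
  obtain f c g c' where d12: "d1 = (f, c)" "d2 = (g, c')" by (cases d1, cases d2)
  have fg: "\<forall>i. g i < 4" using d d12 torus_on_less_4 by (auto simp: darts_def)
  have "(f = g \<and> rot f c = rot g c') \<or> (f = rot g c' \<and> rot f c = g)"
    using e d12 by (simp add: dart_edge_def doubleton_eq_iff)
  then show "d1 = d2"
  proof
    assume a: "f = g \<and> rot f c = rot g c'"
    have "c = c'"
    proof (rule ccontr)
      assume "c \<noteq> c'"
      moreover have "rot f c c = rot g c' c" using a by metis
      ultimately have "Suc (f c) mod 4 = f c" using a by (simp add: rot_def)
      then show False by presburger
    qed
    then show ?thesis using a d12 by simp
  next
    assume "f = rot g c' \<and> rot f c = g"
    then show ?thesis using rot_rot_neq[OF fg] by blast
  qed
qed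

text \<open>Each pair of cube coordinates (2i, 2i+1) carries a Gray code of the i-th entry of a
  torus vertex: 0, 1, 2, 3 become 00, 01, 11, 10.\<close>

definition gray_bit :: "nat \<Rightarrow> bool \<Rightarrow> bool" where
  "gray_bit t b = (if b then t = 1 \<or> t = 2 else t = 2 \<or> t = 3)"

definition gray_val :: "bool \<Rightarrow> bool \<Rightarrow> nat" where
  "gray_val b0 b1 = (if b0 then (if b1 then 2 else 3) else (if b1 then 1 else 0))"

definition gray_enc :: "nat \<Rightarrow> (nat \<Rightarrow> nat) \<Rightarrow> bool list" where
  "gray_enc k f = map (\<lambda>p. gray_bit (f (p div 2)) (odd p)) [0..<2*k]"

definition gray_dec :: "nat \<Rightarrow> bool list \<Rightarrow> nat \<Rightarrow> nat" where
  "gray_dec k u = (\<lambda>i. if i < k then gray_val (u ! (2*i)) (u ! (2*i+1)) else 0)"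

definition cube_edge :: "nat \<Rightarrow> (nat \<Rightarrow> nat) \<times> nat \<Rightarrow> bool list set" where
  "cube_edge k d = gray_enc k ` dart_edge d"

lemma gray_val_gray_bit: "t < 4 \<Longrightarrow> gray_val (gray_bit t False) (gray_bit t True) = t"
  by (auto simp: gray_val_def gray_bit_def)

lemma gray_bit_gray_val: "gray_bit (gray_val a b) False = a" "gray_bit (gray_val a b) True = b"
  by (auto simp: gray_val_def gray_bit_def)

lemma less_4_cases: "(t::nat) < 4 \<Longrightarrow> t = 0 \<or> t = 1 \<or> t = 2 \<or> t = 3"
  by auto

lemma gray_bit_Suc_neq_iff:
  "t < 4 \<Longrightarrow> gray_bit t b \<noteq> gray_bit (Suc t mod 4) b \<longleftrightarrow> b = (t = 0 \<or> t = 2)"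
  by (drule less_4_cases) (cases b; auto simp: gray_bit_def)

lemma gray_val_adjacent:
  assumes "(a0 \<noteq> b0) \<noteq> (a1 \<noteq> b1)"
  shows "gray_val b0 b1 = Suc (gray_val a0 a1) mod 4 \<or> gray_val a0 a1 = Suc (gray_val b0 b1) mod 4"
  using assms by (cases a0; cases a1; cases b0; cases b1) (auto simp: gray_val_def)

lemma length_gray_enc [simp]: "length (gray_enc k f) = 2*k"
  by (simp add: gray_enc_def)

lemma gray_enc_nth: "p < 2*k \<Longrightarrow> gray_enc k f ! p = gray_bit (f (p div 2)) (odd p)"
  by (simp add: gray_enc_def)

lemma gray_enc_nth_even: "i < k \<Longrightarrow> gray_enc k f ! (2*i) = gray_bit (f i) False"
  and gray_enc_nth_odd: "i < k \<Longrightarrow> gray_enc k f ! Suc (2*i) = gray_bit (f i) True"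
  by (simp_all add: gray_enc_nth)

lemma gray_dec_enc: "f \<in> torus_on {..<k} \<Longrightarrow> gray_dec k (gray_enc k f) = f"
  by (rule ext)
     (auto simp: gray_dec_def gray_enc_nth_even gray_enc_nth_odd gray_val_gray_bit torus_on_def)

lemma gray_enc_dec:
  assumes "u \<in> hc_verts (2*k)" shows "gray_enc k (gray_dec k u) = u"
proof (rule nth_equalityI)
  show "length (gray_enc k (gray_dec k u)) = length u" using assms by (simp add: hc_verts_def)
next
  fix p assume "p < length (gray_enc k (gray_dec k u))"
  then have i: "p div 2 < k" by simp
  consider "p = 2 * (p div 2)" | "p = Suc (2 * (p div 2))"
    by (metis odd_two_times_div_two_succ even_two_times_div_two Suc_eq_plus1)
  then show "gray_enc k (gray_dec k u) ! p = u ! p"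
  proof cases
    case 1
    then show ?thesis using gray_enc_nth_even[OF i] i by (metis gray_dec_def gray_bit_gray_val(1))
  next
    case 2
    then show ?thesis
      using gray_enc_nth_odd[OF i] i by (metis gray_dec_def gray_bit_gray_val(2) Suc_eq_plus1)
  qed
qed

lemma gray_dec_in_torus: "gray_dec k u \<in> torus_on {..<k}"
  by (simp add: torus_on_def gray_dec_def gray_val_def)

lemma bij_betw_gray_enc: "bij_betw (gray_enc k) (torus_on {..<k}) (hc_verts (2*k))"
  by (rule bij_betw_byWitness[where f' = "gray_dec k"])
     (auto simp: gray_dec_enc gray_enc_dec gray_dec_in_torus hc_verts_def)

lemma hc_adj_gray_enc_rot:
  assumes f: "f \<in> torus_on {..<k}" and c: "c < k"
  shows "hc_adj (gray_enc k f) (gray_enc k (rot f c))"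
proof -
  define b where "b = (if f c = 0 \<or> f c = 2 then 1 else 0::nat)"
  have fc: "f c < 4" using f torus_on_less_4 by blast
  have "{p. p < 2*k \<and> gray_enc k f ! p \<noteq> gray_enc k (rot f c) ! p} = {2*c + b}"
  proof (intro equalityI subsetI)
    fix p assume "p \<in> {p. p < 2*k \<and> gray_enc k f ! p \<noteq> gray_enc k (rot f c) ! p}"
    then have "p < 2*k" "gray_bit (f (p div 2)) (odd p) \<noteq> gray_bit (rot f c (p div 2)) (odd p)"
      by (auto simp: gray_enc_nth)
    then have "p div 2 = c" "odd p = (f c = 0 \<or> f c = 2)"
      using gray_bit_Suc_neq_iff[OF fc] by (auto simp: rot_def split: if_splits)
    then show "p \<in> {2*c + b}" by (auto simp: b_def elim!: oddE evenE)
  next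
    fix p assume "p \<in> {2*c + b}"
    then have "p < 2*k" "p div 2 = c" "odd p = (f c = 0 \<or> f c = 2)" using c by (auto simp: b_def)
    then show "p \<in> {p. p < 2*k \<and> gray_enc k f ! p \<noteq> gray_enc k (rot f c) ! p}"
      using gray_bit_Suc_neq_iff[OF fc] by (simp add: gray_enc_nth rot_def)
  qed
  then show ?thesis unfolding hc_adj_def by simp
qed

lemma dart_edge_subset_torus: "d \<in> darts k \<Longrightarrow> dart_edge d \<subseteq> torus_on {..<k}"
  by (auto simp: darts_def dart_edge_def rot_in_torus_on)

lemma cube_edge_in_hc_edges:
  assumes "d \<in> darts k" shows "cube_edge k d \<in> hc_edges (2*k)"
proof -
  obtain f c where d: "d = (f, c)" "f \<in> torus_on {..<k}" "c < k"
    using assms by (auto simp: darts_def)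
  have "gray_enc k f \<in> hc_verts (2*k)" "gray_enc k (rot f c) \<in> hc_verts (2*k)"
    by (simp_all add: hc_verts_def)
  moreover have "hc_adj (gray_enc k f) (gray_enc k (rot f c))" using hc_adj_gray_enc_rot d by blast
  moreover have "cube_edge k d = {gray_enc k f, gray_enc k (rot f c)}"
    using d by (simp add: cube_edge_def dart_edge_def)
  ultimately show ?thesis unfolding hc_edges_def by blast
qed

lemma hc_edge_is_cube_edge:
  assumes u: "u \<in> hc_verts (2*k)" and v: "v \<in> hc_verts (2*k)" and adj: "hc_adj u v"
  shows "\<exists>d\<in>darts k. {u, v} = cube_edge k d"
proof -
  define S where "S = {i. i < length u \<and> u ! i \<noteq> v ! i}"
  have lu: "length u = 2*k" using u by (simp add: hc_verts_def)
  have "card S = 1" using adj unfolding hc_adj_def S_def by (rule conjunct2)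
  then obtain p where Sp: "S = {p}" by (rule card_1_singletonE)
  define c where "c = p div 2"
  have "p \<in> S" using Sp by simp
  then have c: "c < k" using lu by (auto simp: S_def c_def less_mult_imp_div_less)
  define f where "f = gray_dec k u"
  define g where "g = gray_dec k v"
  have same: "f i = g i" if "i \<noteq> c" for i
  proof -
    have "2*i \<notin> S" "Suc (2*i) \<notin> S" using that Sp by (auto simp: c_def)
    then show ?thesis using lu by (auto simp: f_def g_def gray_dec_def S_def)
  qed
  have "p = 2*c \<or> p = Suc (2*c)" by (auto simp: c_def)
  moreover have "2*c \<in> S \<longleftrightarrow> p = 2*c" "Suc (2*c) \<in> S \<longleftrightarrow> p = Suc (2*c)" using Sp by auto
  ultimately have "(u ! (2*c) \<noteq> v ! (2*c)) \<noteq> (u ! Suc (2*c) \<noteq> v ! Suc (2*c))"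
    using c lu unfolding S_def by auto
  then have "g c = Suc (f c) mod 4 \<or> f c = Suc (g c) mod 4"
    using c gray_val_adjacent by (simp add: f_def g_def gray_dec_def)
  then have "g = rot f c \<or> f = rot g c"
    using same by (auto simp: rot_def fun_eq_iff)
  moreover have "u = gray_enc k f" "v = gray_enc k g"
    using gray_enc_dec u v by (simp_all add: f_def g_def)
  moreover have "(f, c) \<in> darts k" "(g, c) \<in> darts k"
    using c gray_dec_in_torus by (simp_all add: darts_def f_def g_def)
  ultimately show ?thesis unfolding cube_edge_def dart_edge_def
    by (elim disjE; intro bexI[of _ "(f, c)"] bexI[of _ "(g, c)"]) (auto simp: insert_commute)
qed

lemma hc_edges_eq: "hc_edges (2*k) = cube_edge k ` darts k"
proof (intro equalityI subsetI)
  fix e assume "e \<in> hc_edges (2*k)"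
  then obtain u v where "e = {u, v}" "u \<in> hc_verts (2*k)" "v \<in> hc_verts (2*k)" "hc_adj u v"
    unfolding hc_edges_def by blast
  then show "e \<in> cube_edge k ` darts k" using hc_edge_is_cube_edge by blast
qed (use cube_edge_in_hc_edges in blast)

lemma inj_on_cube_edge: "inj_on (cube_edge k) (darts k)"
proof -
  have "inj_on (gray_enc k) (\<Union> (dart_edge ` darts k))"
    by (rule inj_on_subset[OF bij_betw_imp_inj_on[OF bij_betw_gray_enc]])
       (use dart_edge_subset_torus in blast)
  then have "inj_on ((`) (gray_enc k)) (dart_edge ` darts k)" by (rule inj_on_image)
  then show ?thesis
    unfolding cube_edge_def by (rule comp_inj_on[OF dart_edge_inj, unfolded comp_def])
qed

section \<open>Extending a spanning tree by a four-cycle factor\<close>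

text \<open>Over each vertex g of V, the darts of direction c with level t \<noteq> s g form the fibre
  4-cycle minus one edge, i.e. a path; every dart of D is lifted to the level q of its tail.\<close>

definition lift_darts :: "nat \<Rightarrow> (nat \<Rightarrow> nat) set \<Rightarrow> ((nat \<Rightarrow> nat) \<times> nat) set
    \<Rightarrow> ((nat \<Rightarrow> nat) \<Rightarrow> nat) \<Rightarrow> ((nat \<Rightarrow> nat) \<Rightarrow> nat) \<Rightarrow> ((nat \<Rightarrow> nat) \<times> nat) set" where
  "lift_darts c V D s q = {(g(c := t), c) | g t. g \<in> V \<and> t < 4 \<and> t \<noteq> s g}
     \<union> {(x(c := q x), d) | x d. (x, d) \<in> D}"

definition lift_verts :: "nat \<Rightarrow> (nat \<Rightarrow> nat) set \<Rightarrow> (nat \<Rightarrow> nat) set" where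
  "lift_verts c V = {g(c := t) | g t. g \<in> V \<and> t < 4}"

text \<open>Position of level t on the fibre path s+1, s+2, s+3, s (mod 4).\<close>

definition path_pos :: "nat \<Rightarrow> nat \<Rightarrow> nat" where
  "path_pos s t = (t + 7 - s) mod 4"

definition toward :: "nat \<Rightarrow> nat \<Rightarrow> nat \<Rightarrow> nat" where
  "toward s a t = (if path_pos s a < path_pos s t then (t + 3) mod 4 else Suc t mod 4)"

definition nat_dist :: "nat \<Rightarrow> nat \<Rightarrow> nat" where
  "nat_dist x y = (if x \<le> y then y - x else x - y)"

lemma nat_dist_le_3: "x < 4 \<Longrightarrow> y < 4 \<Longrightarrow> nat_dist x y \<le> 3"
  by (auto simp: nat_dist_def)

lemma path_pos_less_4: "path_pos s t < 4"
  by (simp add: path_pos_def)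

lemma path_pos_inj: "s < 4 \<Longrightarrow> t < 4 \<Longrightarrow> t' < 4 \<Longrightarrow> path_pos s t = path_pos s t' \<Longrightarrow> t = t'"
  using less_4_cases[of s] less_4_cases[of t] less_4_cases[of t'] by (auto simp: path_pos_def)

lemma path_pos_eq_3_iff: "s < 4 \<Longrightarrow> t < 4 \<Longrightarrow> path_pos s t = 3 \<longleftrightarrow> t = s"
  using less_4_cases[of s] less_4_cases[of t] by (auto simp: path_pos_def)

lemma path_pos_Suc:
  "s < 4 \<Longrightarrow> t < 4 \<Longrightarrow> path_pos s t \<le> 2 \<Longrightarrow> path_pos s (Suc t mod 4) = Suc (path_pos s t)"
  using less_4_cases[of s] less_4_cases[of t] by (auto simp: path_pos_def)

lemma path_pos_pred:
  "s < 4 \<Longrightarrow> t < 4 \<Longrightarrow> 1 \<le> path_pos s t \<Longrightarrow> path_pos s ((t + 3) mod 4) = path_pos s t - 1"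
  using less_4_cases[of s] less_4_cases[of t] by (auto simp: path_pos_def)

lemma Suc_mod_4_pred: "t < 4 \<Longrightarrow> (Suc t mod 4 + 3) mod 4 = t"
  and pred_mod_4_Suc: "t < 4 \<Longrightarrow> Suc ((t + 3) mod 4) mod 4 = t"
  using less_4_cases[of t] by auto

lemma rot_fun_upd: "d \<noteq> c \<Longrightarrow> rot (x(c := a)) d = (rot x d)(c := a)"
  by (auto simp: rot_def fun_eq_iff)

lemma rot_fun_upd_same: "rot (g(c := t)) c = g(c := Suc t mod 4)"
  by (simp add: rot_def)

lemma doubleton_fun_upd: "{a, b} = {x, y} \<Longrightarrow> {a(c := t), b(c := t)} = {x(c := t), y(c := t)}"
  by (auto simp: doubleton_eq_iff)

lemma mem_lift_verts_iff:
  assumes "\<And>g. g \<in> V \<Longrightarrow> g c = 0"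
  shows "f \<in> lift_verts c V \<longleftrightarrow> f(c := 0) \<in> V \<and> f c < 4"
proof
  assume "f \<in> lift_verts c V"
  then obtain g t where "g \<in> V" "t < 4" "f = g(c := t)" by (auto simp: lift_verts_def)
  moreover have "(g(c := t))(c := 0) = g" using assms[OF \<open>g \<in> V\<close>] by (auto simp: fun_eq_iff)
  ultimately show "f(c := 0) \<in> V \<and> f c < 4" by simp
next
  show "f(c := 0) \<in> V \<and> f c < 4 \<Longrightarrow> f \<in> lift_verts c V"
    unfolding lift_verts_def by (rule CollectI, rule exI[of _ "f(c := 0)"], rule exI[of _ "f c"]) simp
qed

locale lift_tree =
  fixes c :: nat and V :: "(nat \<Rightarrow> nat) set" and D :: "((nat \<Rightarrow> nat) \<times> nat) set"
    and s q :: "(nat \<Rightarrow> nat) \<Rightarrow> nat"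
    and P :: "(nat \<Rightarrow> nat) \<Rightarrow> nat \<Rightarrow> nat" and r :: "nat \<Rightarrow> nat" and h :: "(nat \<Rightarrow> nat) \<Rightarrow> nat"
  assumes V_coord: "g \<in> V \<Longrightarrow> g c = 0"
    and V_less_4: "g \<in> V \<Longrightarrow> g i < 4"
    and D_dir: "(x, d) \<in> D \<Longrightarrow> d \<noteq> c"
    and s_less_4: "s g < 4" and q_less_4: "q x < 4"
    and root: "r \<in> V"
    and parent: "g \<in> V \<Longrightarrow> g \<noteq> r \<Longrightarrow> P g \<in> V \<and> h (P g) < h g"
    and edges: "dart_edge ` D = {{g, P g} | g. g \<in> V \<and> g \<noteq> r}"
begin

text \<open>The tree edge from g to its parent is lifted to the level q of its tail (the start of its
  dart); through that level the fibre over g is attached to the fibre over P g.\<close>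

definition tail :: "(nat \<Rightarrow> nat) \<Rightarrow> nat \<Rightarrow> nat" where
  "tail g = (if \<exists>d. P g = rot g d then g else P g)"

definition anchor :: "(nat \<Rightarrow> nat) \<Rightarrow> nat" where
  "anchor g = (if g = r then Suc (s g) mod 4 else q (tail g))"

definition lift_parent :: "(nat \<Rightarrow> nat) \<Rightarrow> nat \<Rightarrow> nat" where
  "lift_parent f = (let g = f(c := 0) in
     if f c = anchor g then (P g)(c := f c) else g(c := toward (s g) (anchor g) (f c)))"

definition lift_root :: "nat \<Rightarrow> nat" where
  "lift_root = r(c := anchor r)"

definition lift_height :: "(nat \<Rightarrow> nat) \<Rightarrow> nat" where
  "lift_height f = (let g = f(c := 0) in
     4 * h g + nat_dist (path_pos (s g) (f c)) (path_pos (s g) (anchor g)))"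

lemma anchor_less_4: "anchor g < 4"
  using s_less_4 q_less_4 by (simp add: anchor_def)

lemma fun_upd_base: "g \<in> V \<Longrightarrow> (g(c := t))(c := 0) = g"
  using V_coord by (auto simp: fun_eq_iff)

lemma mem_lift_verts: "f \<in> lift_verts c V \<longleftrightarrow> f(c := 0) \<in> V \<and> f c < 4"
  using mem_lift_verts_iff V_coord by blast

lemma fun_upd_in_lift_verts: "g \<in> V \<Longrightarrow> t < 4 \<Longrightarrow> g(c := t) \<in> lift_verts c V"
  by (auto simp: lift_verts_def)

lemma tail_eq:
  assumes g: "g \<in> V" "g \<noteq> r" and e: "{g, P g} = {x, rot x d}"
  shows "tail g = x"
proof -
  from e have "(g = x \<and> P g = rot x d) \<or> (g = rot x d \<and> P g = x)" by (simp add: doubleton_eq_iff)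
  then show ?thesis
  proof
    assume *: "g = rot x d \<and> P g = x"
    have "\<forall>i. x i < 4" using parent[OF g] * V_less_4 by metis
    then have "\<nexists>d'. P g = rot g d'" using * rot_rot_neq by metis
    then have "tail g = P g" unfolding tail_def by (rule if_not_P)
    then show ?thesis using * by metis
  qed (auto simp: tail_def)
qed

lemma lift_parent_fun_upd:
  "g \<in> V \<Longrightarrow> lift_parent (g(c := t)) =
     (if t = anchor g then (P g)(c := t) else g(c := toward (s g) (anchor g) t))"
  using fun_upd_base by (simp add: lift_parent_def Let_def)

lemma lift_height_fun_upd:
  "g \<in> V \<Longrightarrow> lift_height (g(c := t)) = 4 * h g + nat_dist (path_pos (s g) t) (path_pos (s g) (anchor g))"
  using fun_upd_base by (simp add: lift_height_def Let_def)

lemma lift_root_in_lift_verts: "lift_root \<in> lift_verts c V"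
  using root anchor_less_4 by (simp add: lift_root_def fun_upd_in_lift_verts)

lemma fun_upd_neq_lift_root: "g \<in> V \<Longrightarrow> g \<noteq> r \<or> t \<noteq> anchor g \<Longrightarrow> g(c := t) \<noteq> lift_root"
  using fun_upd_base root by (metis fun_upd_same lift_root_def)

lemma lift_parent_cases:
  assumes f: "f \<in> lift_verts c V" "f \<noteq> lift_root"
  obtains (at_anchor) g where "g \<in> V" "g \<noteq> r" "f = g(c := anchor g)"
      "lift_parent f = (P g)(c := anchor g)"
    | (down) g t where "g \<in> V" "t < 4" "f = g(c := t)"
      "path_pos (s g) (anchor g) < path_pos (s g) t" "lift_parent f = g(c := (t + 3) mod 4)"
    | (up) g t where "g \<in> V" "t < 4" "f = g(c := t)"
      "path_pos (s g) t < path_pos (s g) (anchor g)" "lift_parent f = g(c := Suc t mod 4)"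
proof -
  define g t where "g = f(c := 0)" and "t = f c"
  have g: "g \<in> V" "t < 4" and fg: "f = g(c := t)"
    using f(1) mem_lift_verts by (auto simp: g_def t_def)
  have parent: "lift_parent f =
      (if t = anchor g then (P g)(c := t) else g(c := toward (s g) (anchor g) t))"
    using lift_parent_fun_upd[OF g(1)] fg by simp
  show thesis
  proof (cases "t = anchor g")
    case True
    then have "g \<noteq> r" using f(2) fg by (auto simp: lift_root_def)
    then show thesis using at_anchor g(1) fg parent True by simp
  next
    case False
    then have "path_pos (s g) t \<noteq> path_pos (s g) (anchor g)"
      using path_pos_inj[OF s_less_4 g(2) anchor_less_4] by blast
    then show thesis using down[OF g fg] up[OF g fg] parent False
      by (cases "path_pos (s g) (anchor g) < path_pos (s g) t") (simp_all add: toward_def)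
  qed
qed

lemma lift_parent_decreases:
  assumes f: "f \<in> lift_verts c V" "f \<noteq> lift_root"
  shows "lift_parent f \<in> lift_verts c V \<and> lift_height (lift_parent f) < lift_height f"
  using f
proof (cases rule: lift_parent_cases)
  case (at_anchor g)
  then have Pg: "P g \<in> V" "h (P g) < h g" using parent by auto
  have "lift_height ((P g)(c := anchor g)) \<le> 4 * h (P g) + 3"
    using lift_height_fun_upd[OF Pg(1)] nat_dist_le_3[OF path_pos_less_4 path_pos_less_4] by simp
  then show ?thesis
    using at_anchor Pg lift_height_fun_upd[OF at_anchor(1)] fun_upd_in_lift_verts anchor_less_4
    by fastforce
next
  case (down g t)
  moreover have "path_pos (s g) ((t + 3) mod 4) = path_pos (s g) t - 1"
    using path_pos_pred[OF s_less_4 down(2)] down(4) by simp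
  ultimately show ?thesis
    using lift_height_fun_upd[OF down(1)] fun_upd_in_lift_verts by (auto simp: nat_dist_def)
next
  case (up g t)
  moreover have "path_pos (s g) (Suc t mod 4) = Suc (path_pos (s g) t)"
    using path_pos_Suc[OF s_less_4 up(2)] up(4) path_pos_less_4[of "s g" "anchor g"] by simp
  ultimately show ?thesis
    using lift_height_fun_upd[OF up(1)] fun_upd_in_lift_verts by (auto simp: nat_dist_def)
qed

lemma lifted_tree_edge:
  assumes "(x, d) \<in> D"
  obtains g where "g \<in> V" "g \<noteq> r" "anchor g = q x"
    "dart_edge (x(c := q x), d) = {g(c := q x), lift_parent (g(c := q x))}"
proof -
  have "dart_edge (x, d) \<in> dart_edge ` D" using assms by blast
  then obtain g where g: "{x, rot x d} = {g, P g}" "g \<in> V" "g \<noteq> r"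
    unfolding edges by (auto simp: dart_edge_def)
  have a: "anchor g = q x" using tail_eq[OF g(2,3) g(1)[symmetric]] g(3) by (simp add: anchor_def)
  have "dart_edge (x(c := q x), d) = {x(c := q x), (rot x d)(c := q x)}"
    using rot_fun_upd D_dir[OF assms] by (simp add: dart_edge_def)
  also have "\<dots> = {g(c := q x), (P g)(c := q x)}" using doubleton_fun_upd[OF g(1)] .
  also have "\<dots> = {g(c := q x), lift_parent (g(c := q x))}"
    using lift_parent_fun_upd[OF g(2)] a by simp
  finally show ?thesis using that g(2,3) a by blast
qed

lemma lift_darts_edge_is_parent_edge:
  assumes "z \<in> lift_darts c V D s q"
  shows "\<exists>f. f \<in> lift_verts c V \<and> f \<noteq> lift_root \<and> dart_edge z = {f, lift_parent f}"
proof -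
  from assms consider (fibre) g t where "g \<in> V" "t < 4" "t \<noteq> s g" "z = (g(c := t), c)"
    | (tree) x d where "(x, d) \<in> D" "z = (x(c := q x), d)"
    unfolding lift_darts_def by blast
  then show ?thesis
  proof cases
    case fibre
    define u T A where "u = Suc t mod 4" and "T = path_pos (s g) t" and "A = path_pos (s g) (anchor g)"
    have "T \<noteq> 3" using path_pos_eq_3_iff[OF s_less_4 fibre(2)] fibre(3) T_def by simp
    then have Tu: "path_pos (s g) u = Suc T"
      using path_pos_Suc[OF s_less_4 fibre(2)] path_pos_less_4[of "s g" t] by (simp add: T_def u_def)
    have z: "dart_edge z = {g(c := t), g(c := u)}"
      using fibre(4) by (simp add: dart_edge_def rot_fun_upd_same u_def)
    show ?thesis
    proof (cases "A \<le> T")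
      case True
      then have "u \<noteq> anchor g" "lift_parent (g(c := u)) = g(c := t)"
        using Tu lift_parent_fun_upd[OF fibre(1), of u] Suc_mod_4_pred[OF fibre(2)]
        by (auto simp: A_def toward_def u_def)
      then show ?thesis using z fibre fun_upd_in_lift_verts fun_upd_neq_lift_root
        by (metis insert_commute u_def mod_less_divisor zero_less_numeral)
    next
      case False
      then have "t \<noteq> anchor g" "lift_parent (g(c := t)) = g(c := u)"
        using lift_parent_fun_upd[OF fibre(1), of t] by (auto simp: A_def T_def toward_def u_def)
      then show ?thesis using z fibre fun_upd_in_lift_verts fun_upd_neq_lift_root by metis
    qed
  next
    case tree
    then obtain g where "g \<in> V" "g \<noteq> r" "anchor g = q x"
      "dart_edge z = {g(c := q x), lift_parent (g(c := q x))}"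
      using lifted_tree_edge by metis
    then show ?thesis using fun_upd_in_lift_verts fun_upd_neq_lift_root q_less_4 by metis
  qed
qed

lemma fibre_edge_in_lift_darts:
  assumes "g \<in> V" "t < 4" "t \<noteq> s g"
  shows "{g(c := t), g(c := Suc t mod 4)} \<in> dart_edge ` lift_darts c V D s q"
proof -
  have "(g(c := t), c) \<in> lift_darts c V D s q" using assms unfolding lift_darts_def by blast
  then show ?thesis by (metis dart_edge_def fst_conv snd_conv rot_fun_upd_same image_eqI)
qed

lemma parent_edge_is_lift_darts_edge:
  assumes f: "f \<in> lift_verts c V" "f \<noteq> lift_root"
  shows "{f, lift_parent f} \<in> dart_edge ` lift_darts c V D s q"
  using f
proof (cases rule: lift_parent_cases)
  case (at_anchor g)
  have "{g, P g} \<in> dart_edge ` D" using at_anchor(1,2) edges by blast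
  then obtain x d where xd: "(x, d) \<in> D" "{g, P g} = {x, rot x d}"
    by (auto simp: dart_edge_def)
  have "q x = anchor g" using tail_eq[OF at_anchor(1,2) xd(2)] at_anchor(2) by (simp add: anchor_def)
  have "(x(c := q x), d) \<in> lift_darts c V D s q" using xd(1) unfolding lift_darts_def by blast
  moreover have "dart_edge (x(c := q x), d) = {x(c := q x), (rot x d)(c := q x)}"
    using rot_fun_upd D_dir[OF xd(1)] by (simp add: dart_edge_def)
  moreover have "\<dots> = {f, lift_parent f}"
    using doubleton_fun_upd[OF xd(2)[symmetric]] at_anchor \<open>q x = anchor g\<close> by simp
  ultimately show ?thesis by (metis image_eqI)
next
  case (down g t)
  have "path_pos (s g) ((t + 3) mod 4) = path_pos (s g) t - 1"
    using path_pos_pred[OF s_less_4 down(2)] down(4) by simp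
  moreover have "path_pos (s g) t - 1 \<noteq> 3" using path_pos_less_4[of "s g" t] by simp
  ultimately have "(t + 3) mod 4 \<noteq> s g"
    using path_pos_eq_3_iff[OF s_less_4[of g], of "(t + 3) mod 4"] by simp
  then show ?thesis
    using fibre_edge_in_lift_darts[OF down(1) _ \<open>(t + 3) mod 4 \<noteq> s g\<close>] down pred_mod_4_Suc
    by (simp add: insert_commute)
next
  case (up g t)
  then have "t \<noteq> s g"
    using path_pos_eq_3_iff[OF s_less_4[of g] up(2)] path_pos_less_4[of "s g" "anchor g"] by simp
  then show ?thesis using fibre_edge_in_lift_darts[OF up(1,2)] up by simp
qed

lemma parent_tree_lift: "parent_tree (lift_verts c V) (dart_edge ` lift_darts c V D s q)"
proof -
  have "dart_edge ` lift_darts c V D s q = {{f, lift_parent f} | f. f \<in> lift_verts c V \<and> f \<noteq> lift_root}"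
    using lift_darts_edge_is_parent_edge parent_edge_is_lift_darts_edge by blast
  then show ?thesis
    unfolding parent_tree_def using lift_root_in_lift_verts lift_parent_decreases by blast
qed

end

lemma parent_tree_lift_darts:
  assumes "\<And>g. g \<in> V \<Longrightarrow> g c = 0" and "\<And>g i. g \<in> V \<Longrightarrow> g i < 4"
    and "\<And>x d. (x, d) \<in> D \<Longrightarrow> d \<noteq> c" and "\<And>g. s g < 4" and "\<And>x. q x < 4"
    and "parent_tree V (dart_edge ` D)"
  shows "parent_tree (lift_verts c V) (dart_edge ` lift_darts c V D s q)"
proof -
  obtain P r and h :: "(nat \<Rightarrow> nat) \<Rightarrow> nat" where r: "r \<in> V"
    and P: "\<forall>v\<in>V. v \<noteq> r \<longrightarrow> P v \<in> V \<and> h (P v) < h v"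
    and E: "dart_edge ` D = {{v, P v} | v. v \<in> V \<and> v \<noteq> r}"
    using assms(6) unfolding parent_tree_def by (elim exE conjE)
  interpret lift_tree c V D s q P r h
    by unfold_locales (fact assms(1-5) r E | use P in blast)+
  show ?thesis by (rule parent_tree_lift)
qed

lemma mem_lift_darts_iff:
  assumes "\<And>g. g \<in> V \<Longrightarrow> g c = 0" and "\<And>x d. (x, d) \<in> D \<Longrightarrow> x c = 0"
  shows "(f, i) \<in> lift_darts c V D s q \<longleftrightarrow>
    (i = c \<and> f(c := 0) \<in> V \<and> f c < 4 \<and> f c \<noteq> s (f(c := 0)))
    \<or> (f c = q (f(c := 0)) \<and> (f(c := 0), i) \<in> D)"
proof
  assume "(f, i) \<in> lift_darts c V D s q"
  then consider (fibre) g t where "g \<in> V" "t < 4" "t \<noteq> s g" "f = g(c := t)" "i = c"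
    | (tree) x where "(x, i) \<in> D" "f = x(c := q x)"
    unfolding lift_darts_def by blast
  then show "(i = c \<and> f(c := 0) \<in> V \<and> f c < 4 \<and> f c \<noteq> s (f(c := 0)))
    \<or> (f c = q (f(c := 0)) \<and> (f(c := 0), i) \<in> D)"
  proof cases
    case fibre
    then have "f(c := 0) = g" using assms(1) by (auto simp: fun_eq_iff)
    then show ?thesis using fibre by simp
  next
    case tree
    then have "f(c := 0) = x" using assms(2) by (auto simp: fun_eq_iff)
    then show ?thesis using tree by simp
  qed
next
  assume "(i = c \<and> f(c := 0) \<in> V \<and> f c < 4 \<and> f c \<noteq> s (f(c := 0)))
    \<or> (f c = q (f(c := 0)) \<and> (f(c := 0), i) \<in> D)"
  then show "(f, i) \<in> lift_darts c V D s q"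
  proof
    assume *: "i = c \<and> f(c := 0) \<in> V \<and> f c < 4 \<and> f c \<noteq> s (f(c := 0))"
    have "f = (f(c := 0))(c := f c)" by simp
    then show ?thesis using * unfolding lift_darts_def by blast
  next
    assume *: "f c = q (f(c := 0)) \<and> (f(c := 0), i) \<in> D"
    then have "f = (f(c := 0))(c := q (f(c := 0)))" by (simp add: fun_eq_iff)
    then show ?thesis using * unfolding lift_darts_def by blast
  qed
qed

definition chain_holds :: "nat list \<Rightarrow> nat list \<Rightarrow> (nat \<Rightarrow> nat) \<Rightarrow> nat \<Rightarrow> bool" where
  "chain_holds \<sigma> \<epsilon> f l \<longleftrightarrow> (\<forall>m<l. f (\<sigma>!m) = (f (\<sigma>!Suc m) + \<epsilon>!Suc m) mod 4)"

definition wrap_fails :: "nat list \<Rightarrow> nat list \<Rightarrow> nat \<Rightarrow> (nat \<Rightarrow> nat) \<Rightarrow> nat \<Rightarrow> bool" where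
  "wrap_fails \<sigma> \<epsilon> \<rho> f l \<longleftrightarrow>
     (Suc l < length \<sigma> \<longrightarrow> f (last \<sigma>) \<noteq> (f (\<sigma>!0) + \<epsilon>!0) mod 4)
   \<and> (Suc l = length \<sigma> \<longrightarrow> f (last \<sigma>) \<noteq> \<rho>)"

definition chain_darts :: "nat list \<Rightarrow> nat list \<Rightarrow> nat \<Rightarrow> ((nat \<Rightarrow> nat) \<times> nat) set" where
  "chain_darts \<sigma> \<epsilon> \<rho> = {(f, i). f \<in> torus_on (set \<sigma>)
     \<and> (\<exists>l<length \<sigma>. i = \<sigma>!l \<and> chain_holds \<sigma> \<epsilon> f l \<and> wrap_fails \<sigma> \<epsilon> \<rho> f l)}"

lemma chain_darts_subset: "(f, i) \<in> chain_darts \<sigma> \<epsilon> \<rho> \<Longrightarrow> f \<in> torus_on (set \<sigma>) \<and> i \<in> set \<sigma>"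
  by (auto simp: chain_darts_def)

lemma torus_on_empty: "torus_on {} = {\<lambda>_. 0}"
  by (auto simp: torus_on_def)

lemma lift_verts_torus_on:
  assumes "c \<notin> C" shows "lift_verts c (torus_on C) = torus_on (insert c C)"
proof -
  have "g c = 0" if "g \<in> torus_on C" for g using that assms by (simp add: torus_on_def)
  then have "f \<in> lift_verts c (torus_on C) \<longleftrightarrow> f \<in> torus_on (insert c C)" for f
    using mem_lift_verts_iff torus_on_insert[of f c C] assms by (simp add: Diff_insert_absorb)
  then show ?thesis by blast
qed

lemma chain_darts_singleton: "chain_darts [c] [e] \<rho> = lift_darts c {\<lambda>_. 0} {} (\<lambda>_. \<rho>) (\<lambda>_. 0)"
proof -
  have "(f, i) \<in> chain_darts [c] [e] \<rho> \<longleftrightarrow> (f, i) \<in> lift_darts c {\<lambda>_. 0} {} (\<lambda>_. \<rho>) (\<lambda>_. 0)" for f i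
    using mem_lift_darts_iff[of "{\<lambda>_. 0}" c "{}" f i "\<lambda>_. \<rho>" "\<lambda>_. 0"] torus_on_insert[of f c "{}"]
    by (auto simp: chain_darts_def chain_holds_def wrap_fails_def torus_on_empty)
  then show ?thesis by auto
qed

lemma mod_4_shift_iff: "(a::nat) < 4 \<Longrightarrow> e < 4 \<Longrightarrow> t < 4 \<Longrightarrow> t = (a + 4 - e) mod 4 \<longleftrightarrow> a = (t + e) mod 4"
  by (drule less_4_cases)+ (elim disjE; simp)

context
  fixes c c' :: nat and \<tau> :: "nat list" and e0 e1 :: nat and \<eta> :: "nat list" and f :: "nat \<Rightarrow> nat"
  assumes distinct: "distinct (c # c' # \<tau>)"
begin

lemma chain_holds_Cons_Suc:
  assumes "l < length (c' # \<tau>)"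
  shows "chain_holds (c # c' # \<tau>) (e0 # e1 # \<eta>) f (Suc l) \<longleftrightarrow>
    f c = (f c' + e1) mod 4 \<and> chain_holds (c' # \<tau>) ((e0 + e1) mod 4 # \<eta>) (f(c := 0)) l"
proof -
  have "(c' # \<tau>) ! m \<noteq> c" if "m \<le> l" for m
    using distinct assms that nth_mem[of m "c' # \<tau>"] by auto
  moreover have "\<tau> ! m \<noteq> c" if "m < l" for m
    using calculation[of "Suc m"] that by simp
  ultimately show ?thesis
    unfolding chain_holds_def All_less_Suc2 by (auto simp: less_Suc_eq_le)
qed

lemma wrap_fails_Cons_Suc:
  assumes "f c = (f c' + e1) mod 4"
  shows "wrap_fails (c # c' # \<tau>) (e0 # e1 # \<eta>) \<rho> f (Suc l) \<longleftrightarrow>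
    wrap_fails (c' # \<tau>) ((e0 + e1) mod 4 # \<eta>) \<rho> (f(c := 0)) l"
proof -
  have "last (c' # \<tau>) \<noteq> c" "c' \<noteq> c" using distinct last_in_set[of "c' # \<tau>"] by auto
  moreover have "(f c + e0) mod 4 = (f c' + (e0 + e1) mod 4) mod 4"
    using assms by (simp add: mod_add_left_eq mod_add_right_eq ac_simps)
  ultimately show ?thesis unfolding wrap_fails_def by simp
qed

lemma mem_chain_darts_Cons_Cons_iff:
  "(f, i) \<in> chain_darts (c # c' # \<tau>) (e0 # e1 # \<eta>) \<rho> \<longleftrightarrow> f \<in> torus_on (set (c # c' # \<tau>))
     \<and> ((i = c \<and> f (last (c' # \<tau>)) \<noteq> (f c + e0) mod 4)
       \<or> (f c = (f c' + e1) mod 4 \<and> (f(c := 0), i) \<in> chain_darts (c' # \<tau>) ((e0 + e1) mod 4 # \<eta>) \<rho>))"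
proof -
  have tor: "f \<in> torus_on (set (c # c' # \<tau>)) \<Longrightarrow> f(c := 0) \<in> torus_on (set (c' # \<tau>))"
    using torus_on_insert[of f c "set (c' # \<tau>)"] distinct by auto
  have "(\<exists>l<length (c # c' # \<tau>). i = (c # c' # \<tau>)!l \<and> chain_holds (c # c' # \<tau>) (e0 # e1 # \<eta>) f l
            \<and> wrap_fails (c # c' # \<tau>) (e0 # e1 # \<eta>) \<rho> f l)
    \<longleftrightarrow> (i = c \<and> f (last (c' # \<tau>)) \<noteq> (f c + e0) mod 4)
       \<or> (\<exists>l<length (c' # \<tau>). i = (c' # \<tau>)!l \<and> chain_holds (c # c' # \<tau>) (e0 # e1 # \<eta>) f (Suc l)
            \<and> wrap_fails (c # c' # \<tau>) (e0 # e1 # \<eta>) \<rho> f (Suc l))"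
    unfolding length_Cons Ex_less_Suc2 by (simp add: chain_holds_def wrap_fails_def)
  also have "\<dots> \<longleftrightarrow> (i = c \<and> f (last (c' # \<tau>)) \<noteq> (f c + e0) mod 4)
       \<or> (f c = (f c' + e1) mod 4 \<and> (\<exists>l<length (c' # \<tau>). i = (c' # \<tau>)!l
            \<and> chain_holds (c' # \<tau>) ((e0 + e1) mod 4 # \<eta>) (f(c := 0)) l
            \<and> wrap_fails (c' # \<tau>) ((e0 + e1) mod 4 # \<eta>) \<rho> (f(c := 0)) l))"
    using chain_holds_Cons_Suc wrap_fails_Cons_Suc by (metis length_Cons)
  finally show ?thesis using tor unfolding chain_darts_def mem_Collect_eq case_prod_conv by blast
qed

end

lemma chain_darts_Cons_Cons:
  assumes distinct: "distinct (c # c' # \<tau>)" and e0: "e0 < 4"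
  shows "chain_darts (c # c' # \<tau>) (e0 # e1 # \<eta>) \<rho> =
    lift_darts c (torus_on (set (c' # \<tau>))) (chain_darts (c' # \<tau>) ((e0 + e1) mod 4 # \<eta>) \<rho>)
      (\<lambda>g. (g (last (c' # \<tau>)) + 4 - e0) mod 4) (\<lambda>x. (x c' + e1) mod 4)"
    (is "?L = lift_darts c ?V ?D ?s ?q")
proof (rule set_eqI)
  fix z :: "(nat \<Rightarrow> nat) \<times> nat"
  obtain f i where z: "z = (f, i)" by (cases z)
  have c: "c \<notin> set (c' # \<tau>)" "last (c' # \<tau>) \<noteq> c" "c' \<noteq> c"
    using distinct last_in_set[of "c' # \<tau>"] by auto
  have V0: "g c = 0" if "g \<in> ?V" for g using that c by (simp add: torus_on_def)
  have tor: "f \<in> torus_on (set (c # c' # \<tau>)) \<longleftrightarrow> f(c := 0) \<in> ?V \<and> f c < 4"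
    using torus_on_insert[of f c "set (c' # \<tau>)"] c by simp
  have last4: "f (last (c' # \<tau>)) < 4" if "f(c := 0) \<in> ?V"
    using torus_on_less_4[OF that, of "last (c' # \<tau>)"] c by simp
  have D0: "f(c := 0) \<in> ?V" if "(f(c := 0), i) \<in> ?D" using chain_darts_subset that by blast
  have "z \<in> ?L \<longleftrightarrow> (i = c \<and> f(c := 0) \<in> ?V \<and> f c < 4 \<and> f c \<noteq> ?s (f(c := 0)))
      \<or> (f c = ?q (f(c := 0)) \<and> (f(c := 0), i) \<in> ?D)"
    unfolding z mem_chain_darts_Cons_Cons_iff[OF distinct] tor
    using c last4 mod_4_shift_iff[of "f (last (c' # \<tau>))" e0 "f c"] e0 D0
    by auto
  also have "\<dots> \<longleftrightarrow> z \<in> lift_darts c ?V ?D ?s ?q"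
    unfolding z using V0 chain_darts_subset by (intro mem_lift_darts_iff[symmetric]) blast+
  finally show "z \<in> ?L \<longleftrightarrow> z \<in> lift_darts c ?V ?D ?s ?q" .
qed

lemma parent_tree_chain_darts:
  "distinct \<sigma> \<Longrightarrow> length \<epsilon> = length \<sigma> \<Longrightarrow> \<forall>e\<in>set \<epsilon>. e < 4 \<Longrightarrow> \<rho> < 4
    \<Longrightarrow> parent_tree (torus_on (set \<sigma>)) (dart_edge ` chain_darts \<sigma> \<epsilon> \<rho>)"
proof (induction \<sigma> arbitrary: \<epsilon> rule: induct_list012)
  case 1
  show ?case
    unfolding parent_tree_def list.set(1) torus_on_empty chain_darts_def
    by (rule exI[of _ id], rule exI[of _ "\<lambda>_. 0"], rule exI[of _ "\<lambda>_. 0::nat"]) auto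
next
  case (2 c)
  then obtain e where "\<epsilon> = [e]" by (cases \<epsilon>) auto
  moreover have "parent_tree (lift_verts c {\<lambda>_. 0}) (dart_edge ` lift_darts c {\<lambda>_. 0} {} (\<lambda>_. \<rho>) (\<lambda>_. 0))"
    using "2.prems"(4) by (intro parent_tree_lift_darts) (auto simp: parent_tree_def)
  ultimately show ?case
    using lift_verts_torus_on[of c "{}"] by (simp add: chain_darts_singleton torus_on_empty)
next
  case (3 c c' \<tau>)
  obtain e0 e1 \<eta> where \<epsilon>: "\<epsilon> = e0 # e1 # \<eta>" using "3.prems"(2)
    by (cases \<epsilon>; cases "tl \<epsilon>") auto
  have e: "e0 < 4" "e1 < 4" "\<forall>e\<in>set \<eta>. e < 4" using "3.prems"(3) \<epsilon> by auto
  have c: "c \<notin> set (c' # \<tau>)" using "3.prems"(1) by simp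
  have IH: "parent_tree (torus_on (set (c' # \<tau>))) (dart_edge ` chain_darts (c' # \<tau>) ((e0 + e1) mod 4 # \<eta>) \<rho>)"
    using "3.IH"(2) "3.prems" \<epsilon> e by simp
  have "parent_tree (lift_verts c (torus_on (set (c' # \<tau>))))
      (dart_edge ` lift_darts c (torus_on (set (c' # \<tau>))) (chain_darts (c' # \<tau>) ((e0 + e1) mod 4 # \<eta>) \<rho>)
        (\<lambda>g. (g (last (c' # \<tau>)) + 4 - e0) mod 4) (\<lambda>x. (x c' + e1) mod 4))"
  proof (rule parent_tree_lift_darts)
    show "g c = 0" if "g \<in> torus_on (set (c' # \<tau>))" for g using that c by (simp add: torus_on_def)
    show "d \<noteq> c" if "(x, d) \<in> chain_darts (c' # \<tau>) ((e0 + e1) mod 4 # \<eta>) \<rho>" for x d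
      using chain_darts_subset[OF that] c by blast
  qed (use torus_on_less_4 IH in auto)
  then show ?case
    using chain_darts_Cons_Cons[OF "3.prems"(1) e(1)] lift_verts_torus_on[OF c] \<epsilon> by simp
qed

section \<open>The k trees and the matching\<close>

definition carry :: "nat \<Rightarrow> nat \<Rightarrow> nat" where
  "carry k x = (if x = k - 1 then 1 else 0)"

definition carries :: "nat \<Rightarrow> (nat \<Rightarrow> nat) \<Rightarrow> nat \<Rightarrow> bool" where
  "carries k f x \<longleftrightarrow> f (Suc x mod k) = (f x + carry k x) mod 4"

definition base_level :: "nat \<Rightarrow> nat" where
  "base_level i = (if even i then 0 else 2)"

definition tree_dirs :: "nat \<Rightarrow> nat \<Rightarrow> nat list" where
  "tree_dirs k j = map (\<lambda>m. (j + k - m) mod k) [0..<k]"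

definition tree_darts :: "nat \<Rightarrow> nat \<Rightarrow> ((nat \<Rightarrow> nat) \<times> nat) set" where
  "tree_darts k j = chain_darts (tree_dirs k j) (map (carry k) (tree_dirs k j)) (base_level (Suc j mod k))"

definition breaks_first :: "nat \<Rightarrow> (nat \<Rightarrow> nat) \<Rightarrow> nat \<Rightarrow> nat \<Rightarrow> bool" where
  "breaks_first k f i l \<longleftrightarrow> (\<forall>t<l. carries k f ((i + t) mod k))
     \<and> (Suc l < k \<longrightarrow> \<not> carries k f ((i + l) mod k)) \<and> (Suc l = k \<longrightarrow> f i \<noteq> base_level i)"

lemma add_diff_mod_eq:
  fixes a b k :: nat
  assumes "a < k" "b < k" shows "(a + k - b) mod k = (if b \<le> a then a - b else a + k - b)"
proof (cases "b \<le> a")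
  case True
  then have "a + k - b = (a - b) + k" by arith
  then have "(a + k - b) mod k = (a - b) mod k" by (simp only: mod_add_self2)
  also have "\<dots> = a - b" using assms(1) by (simp add: less_imp_diff_less)
  finally show ?thesis using True by simp
qed (use assms in simp)

lemma tree_dirs_nth: "m < k \<Longrightarrow> tree_dirs k j ! m = (j + k - m) mod k"
  by (simp add: tree_dirs_def)

lemma length_tree_dirs [simp]: "length (tree_dirs k j) = k"
  by (simp add: tree_dirs_def)

lemma set_tree_dirs: assumes "j < k" shows "set (tree_dirs k j) = {..<k}"
proof (intro equalityI subsetI)
  fix x assume "x \<in> {..<k}"
  then have "tree_dirs k j ! ((j + k - x) mod k) = x" "(j + k - x) mod k < k"
    using assms by (auto simp: tree_dirs_nth add_diff_mod_eq)
  then show "x \<in> set (tree_dirs k j)" by (metis length_tree_dirs nth_mem)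
qed (use assms in \<open>auto simp: tree_dirs_def\<close>)

lemma distinct_tree_dirs: assumes "j < k" shows "distinct (tree_dirs k j)"
  using set_tree_dirs[OF assms] by (simp add: card_distinct)

text \<open>Read backwards from position L = j - i (mod k), the directions are i, i + 1, ..., j.\<close>

lemma tree_dirs_nth_from:
  assumes "i < k" "j < k" "m \<le> (j + k - i) mod k"
  shows "tree_dirs k j ! m = (i + ((j + k - i) mod k - m)) mod k"
  using assms by (auto simp: tree_dirs_nth add_diff_mod_eq mod_if split: if_splits)

lemma tree_dirs_eq_iff:
  assumes "i < k" "j < k" "l < k"
  shows "tree_dirs k j ! l = i \<longleftrightarrow> l = (j + k - i) mod k"
  using assms by (auto simp: tree_dirs_nth add_diff_mod_eq)

context
  fixes k i j :: nat
  assumes i: "i < k" and j: "j < k"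
begin

lemma chain_holds_tree_dirs:
  "chain_holds (tree_dirs k j) (map (carry k) (tree_dirs k j)) f ((j + k - i) mod k)
    \<longleftrightarrow> (\<forall>t<(j + k - i) mod k. carries k f ((i + t) mod k))"
proof -
  define L where "L = (j + k - i) mod k"
  have L: "L < k" using j by (simp add: L_def)
  have step: "f (tree_dirs k j ! m)
        = (f (tree_dirs k j ! Suc m) + map (carry k) (tree_dirs k j) ! Suc m) mod 4
      \<longleftrightarrow> carries k f ((i + (L - Suc m)) mod k)" if m: "m < L" for m
  proof -
    have "tree_dirs k j ! Suc m = (i + (L - Suc m)) mod k"
      using tree_dirs_nth_from[OF i j, of "Suc m"] m by (simp add: L_def)
    moreover have "tree_dirs k j ! m = Suc ((i + (L - Suc m)) mod k) mod k"
      using tree_dirs_nth_from[OF i j, of m] m by (simp add: L_def Suc_diff_Suc mod_Suc_eq)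
    ultimately show ?thesis using m L by (simp add: carries_def)
  qed
  have "chain_holds (tree_dirs k j) (map (carry k) (tree_dirs k j)) f L
      \<longleftrightarrow> (\<forall>m<L. carries k f ((i + (L - Suc m)) mod k))"
    unfolding chain_holds_def using step by blast
  also have "\<dots> \<longleftrightarrow> (\<forall>t<L. carries k f ((i + t) mod k))"
  proof
    assume *: "\<forall>m<L. carries k f ((i + (L - Suc m)) mod k)"
    show "\<forall>t<L. carries k f ((i + t) mod k)"
    proof (intro allI impI)
      fix t assume "t < L"
      then have "L - Suc t < L" "L - Suc (L - Suc t) = t" by auto
      then show "carries k f ((i + t) mod k)" using * by metis
    qed
  next
    assume *: "\<forall>t<L. carries k f ((i + t) mod k)"
    show "\<forall>m<L. carries k f ((i + (L - Suc m)) mod k)"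
    proof (intro allI impI)
      fix m assume "m < L"
      then have "L - Suc m < L" by arith
      then show "carries k f ((i + (L - Suc m)) mod k)" using * by blast
    qed
  qed
  finally show ?thesis by (simp add: L_def)
qed

lemma wrap_fails_tree_dirs:
  "wrap_fails (tree_dirs k j) (map (carry k) (tree_dirs k j)) (base_level (Suc j mod k)) f ((j + k - i) mod k)
    \<longleftrightarrow> (Suc ((j + k - i) mod k) < k \<longrightarrow> \<not> carries k f ((i + (j + k - i) mod k) mod k))
      \<and> (Suc ((j + k - i) mod k) = k \<longrightarrow> f i \<noteq> base_level i)"
proof -
  define L where "L = (j + k - i) mod k"
  have k0: "0 < k" using i by simp
  have hd: "tree_dirs k j ! 0 = (i + L) mod k"
    using tree_dirs_nth_from[OF i j, of 0] by (simp add: L_def)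
  have "j = (i + L) mod k" using hd j k0 by (simp add: tree_dirs_nth)
  moreover have "last (tree_dirs k j) = tree_dirs k j ! (k - 1)"
    using k0 by (simp add: last_conv_nth tree_dirs_def)
  ultimately have last: "last (tree_dirs k j) = Suc ((i + L) mod k) mod k"
    using k0 j by (simp add: tree_dirs_nth Suc_diff_Suc)
  moreover have "Suc ((i + L) mod k) mod k = i" if "Suc L = k"
  proof -
    have "Suc ((i + L) mod k) mod k = Suc (i + L) mod k" by (simp add: mod_Suc_eq)
    also have "Suc (i + L) = i + k" using that by simp
    finally show ?thesis using i by simp
  qed
  ultimately show ?thesis
    unfolding wrap_fails_def L_def[symmetric] using hd last k0
    by (auto simp: carries_def tree_dirs_def)
qed

lemma mem_tree_darts_iff:
  "(f, i) \<in> tree_darts k j \<longleftrightarrow> f \<in> torus_on {..<k} \<and> breaks_first k f i ((j + k - i) mod k)"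
proof -
  have L: "(j + k - i) mod k < k" using j by simp
  have "(f, i) \<in> tree_darts k j \<longleftrightarrow> f \<in> torus_on {..<k}
      \<and> chain_holds (tree_dirs k j) (map (carry k) (tree_dirs k j)) f ((j + k - i) mod k)
      \<and> wrap_fails (tree_dirs k j) (map (carry k) (tree_dirs k j)) (base_level (Suc j mod k)) f ((j + k - i) mod k)"
  proof -
    have "(\<exists>l<k. i = tree_dirs k j ! l \<and> P l) \<longleftrightarrow> P ((j + k - i) mod k)" for P
      using tree_dirs_eq_iff[OF i j] L by metis
    then show ?thesis unfolding tree_darts_def chain_darts_def set_tree_dirs[OF j] by simp
  qed
  then show ?thesis
    unfolding chain_holds_tree_dirs wrap_fails_tree_dirs breaks_first_def by simp
qed

end

definition unbroken :: "nat \<Rightarrow> (nat \<Rightarrow> nat) \<Rightarrow> nat \<Rightarrow> bool" where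
  "unbroken k f i \<longleftrightarrow> (\<forall>t<k - 1. carries k f ((i + t) mod k)) \<and> f i = base_level i"

definition matching_darts :: "nat \<Rightarrow> ((nat \<Rightarrow> nat) \<times> nat) set" where
  "matching_darts k = {(f, i). f \<in> torus_on {..<k} \<and> i < k \<and> unbroken k f i}"

lemma breaks_first_unique:
  assumes "breaks_first k f i l" "breaks_first k f i l'" "l < k" "l' < k"
  shows "l = l'"
proof (rule ccontr)
  assume "l \<noteq> l'"
  then consider "l < l'" | "l' < l" by linarith
  then show False
    by cases (use assms in \<open>auto simp: breaks_first_def\<close>)
qed

lemma breaks_first_not_unbroken: "breaks_first k f i l \<Longrightarrow> l < k \<Longrightarrow> \<not> unbroken k f i"
  by (cases "Suc l < k") (auto simp: breaks_first_def unbroken_def)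

lemma breaks_first_exists:
  assumes "\<not> unbroken k f i" "0 < k"
  shows "\<exists>l<k. breaks_first k f i l"
proof (cases "\<forall>t<k - 1. carries k f ((i + t) mod k)")
  case True
  then have "breaks_first k f i (k - 1)" using assms by (simp add: breaks_first_def unbroken_def)
  then show ?thesis using assms(2) by (intro exI[of _ "k - 1"]) simp
next
  case False
  define l where "l = (LEAST t. t < k - 1 \<and> \<not> carries k f ((i + t) mod k))"
  have l: "l < k - 1" "\<not> carries k f ((i + l) mod k)"
    using False LeastI_ex[of "\<lambda>t. t < k - 1 \<and> \<not> carries k f ((i + t) mod k)"] by (auto simp: l_def)
  have "carries k f ((i + t) mod k)" if "t < l" for t
    using not_less_Least[of t "\<lambda>t. t < k - 1 \<and> \<not> carries k f ((i + t) mod k)"] that l(1)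
    by (auto simp: l_def)
  then have "breaks_first k f i l" using l by (auto simp: breaks_first_def)
  then show ?thesis using l(1) by (intro exI[of _ l]) simp
qed

lemma tree_darts_subset: "j < k \<Longrightarrow> tree_darts k j \<subseteq> darts k"
  using chain_darts_subset set_tree_dirs by (fastforce simp: tree_darts_def darts_def)

lemma matching_darts_subset: "matching_darts k \<subseteq> darts k"
  by (auto simp: matching_darts_def darts_def)

lemma tree_darts_disjoint:
  assumes "j < k" "j' < k" "j \<noteq> j'"
  shows "tree_darts k j \<inter> tree_darts k j' = {}"
proof (rule ccontr)
  assume "tree_darts k j \<inter> tree_darts k j' \<noteq> {}"
  then obtain f i where fi: "(f, i) \<in> tree_darts k j" "(f, i) \<in> tree_darts k j'" by auto
  then have i: "i < k" using tree_darts_subset[OF assms(1)] by (auto simp: darts_def)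
  then have "(j + k - i) mod k = (j' + k - i) mod k"
    using fi mem_tree_darts_iff[OF i] assms breaks_first_unique
    by (metis mod_less_divisor gr_zeroI not_less0)
  then show False using assms i by (auto simp: add_diff_mod_eq split: if_splits)
qed

lemma tree_darts_matching_darts_disjoint:
  assumes "j < k" shows "tree_darts k j \<inter> matching_darts k = {}"
  using mem_tree_darts_iff[OF _ assms] breaks_first_not_unbroken assms
  by (auto simp: matching_darts_def)

lemma darts_eq_Un: "darts k = (\<Union>j<k. tree_darts k j) \<union> matching_darts k"
proof (intro equalityI subsetI)
  fix z assume z: "z \<in> darts k"
  obtain f i where zz: "z = (f, i)" "f \<in> torus_on {..<k}" "i < k" using z by (auto simp: darts_def)
  show "z \<in> (\<Union>j<k. tree_darts k j) \<union> matching_darts k"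
  proof (cases "unbroken k f i")
    case False
    then obtain l where l: "l < k" "breaks_first k f i l" using breaks_first_exists zz(3) by fastforce
    define j where "j = (i + l) mod k"
    have j: "j < k" "(j + k - i) mod k = l"
      using zz(3) l(1) by (auto simp: j_def add_diff_mod_eq mod_if)
    then have "(f, i) \<in> tree_darts k j" using mem_tree_darts_iff[OF zz(3) j(1)] zz(2) l(2) by simp
    then show ?thesis using j(1) zz(1) by blast
  qed (use zz in \<open>simp add: matching_darts_def\<close>)
qed (use tree_darts_subset matching_darts_subset in blast)

text \<open>The only vertex whose carry chain from direction i never breaks: level a + 1 below i,
  level a from i on.\<close>

definition staircase :: "nat \<Rightarrow> nat \<Rightarrow> nat \<Rightarrow> nat \<Rightarrow> nat" where
  "staircase k a p = (\<lambda>x. if x < k then (if x < p then a + 1 else a) else 0)"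

lemma base_level_cases: "base_level i = 0 \<or> base_level i = 2"
  by (simp add: base_level_def)

lemma staircase_in_torus: "a \<le> 2 \<Longrightarrow> staircase k a p \<in> torus_on {..<k}"
  by (simp add: staircase_def torus_on_def)

lemma Suc_add_mod_neq:
  fixes i t k :: nat
  assumes "i < k" "Suc t < k" shows "Suc ((i + t) mod k) mod k \<noteq> i"
proof -
  have "Suc ((i + t) mod k) mod k = (i + Suc t) mod k" by (simp add: mod_Suc_eq)
  also have "\<dots> = (if i + Suc t < k then i + Suc t else i + Suc t - k)"
    using assms by (simp add: mod_if)
  finally show ?thesis using assms by auto
qed

lemma staircase_carries:
  assumes "i < k" "x < k" "Suc x mod k \<noteq> i" "a \<le> 2"
  shows "carries k (staircase k a i) x"
proof (cases "Suc x < k")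
  case True
  then show ?thesis using assms by (auto simp: carries_def carry_def staircase_def)
next
  case False
  then have "Suc x = k" using assms(2) by simp
  then have "x = k - 1" "0 < i" using assms(3) by auto
  then show ?thesis using assms by (auto simp: carries_def carry_def staircase_def)
qed

lemma unbroken_staircase:
  assumes i: "i < k" shows "unbroken k (staircase k (base_level i) i) i"
proof -
  have "base_level i \<le> 2" using base_level_cases[of i] by auto
  then have "carries k (staircase k (base_level i) i) ((i + t) mod k)" if "t < k - 1" for t
    using staircase_carries[OF i _ Suc_add_mod_neq[OF i]] that i by simp
  then show ?thesis using i by (simp add: unbroken_def staircase_def)
qed

lemma unbroken_imp_staircase:
  assumes f: "f \<in> torus_on {..<k}" and i: "i < k" and u: "unbroken k f i"
  shows "f = staircase k (base_level i) i"
proof -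
  let ?g = "staircase k (base_level i) i"
  have ug: "unbroken k ?g i" using unbroken_staircase[OF i] .
  have along: "f ((i + t) mod k) = ?g ((i + t) mod k)" if "t < k" for t
    using that
  proof (induction t)
    case 0
    then show ?case using u i by (simp add: unbroken_def staircase_def)
  next
    case (Suc t)
    then have "carries k f ((i + t) mod k)" "carries k ?g ((i + t) mod k)"
      using u ug by (simp_all add: unbroken_def)
    then show ?case using Suc by (simp add: carries_def mod_Suc_eq)
  qed
  show ?thesis
  proof
    fix x
    show "f x = ?g x"
    proof (cases "x < k")
      case True
      then have "(i + (x + k - i) mod k) mod k = x"
        using i by (simp add: add_diff_mod_eq mod_if)
      then show ?thesis using along[of "(x + k - i) mod k"] i by simp
    qed (use f in \<open>simp add: torus_on_def staircase_def\<close>)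
  qed
qed

lemma matching_darts_eq: "matching_darts k = (\<lambda>i. (staircase k (base_level i) i, i)) ` {..<k}"
proof (intro equalityI subsetI)
  fix z assume "z \<in> matching_darts k"
  then obtain f i where "z = (f, i)" "f \<in> torus_on {..<k}" "i < k" "unbroken k f i"
    by (auto simp: matching_darts_def)
  then show "z \<in> (\<lambda>i. (staircase k (base_level i) i, i)) ` {..<k}"
    using unbroken_imp_staircase by blast
next
  fix z assume "z \<in> (\<lambda>i. (staircase k (base_level i) i, i)) ` {..<k}"
  then obtain i where i: "i < k" "z = (staircase k (base_level i) i, i)" by blast
  have "base_level i \<le> 2" using base_level_cases[of i] by auto
  then show "z \<in> matching_darts k"
    using unbroken_staircase[OF i(1)] staircase_in_torus i by (simp add: matching_darts_def)
qed

lemma rot_staircase: "i < k \<Longrightarrow> a \<le> 2 \<Longrightarrow> rot (staircase k a i) i = staircase k a (Suc i)"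
  by (auto simp: rot_def staircase_def fun_eq_iff)

lemma staircase_eq_imp:
  assumes "0 < k" "a = 0 \<or> a = 2" "a' = 0 \<or> a' = 2" "p \<le> k" "p' \<le> k"
    and eq: "staircase k a p = staircase k a' p'"
  shows "a = a' \<and> p = p'"
proof -
  have "staircase k a p (k - 1) = staircase k a' p' (k - 1)" using eq by simp
  then have a: "a = a'" using assms(1-3) by (auto simp: staircase_def split: if_splits)
  have "p = p'"
  proof (rule ccontr)
    assume "p \<noteq> p'"
    then have "staircase k a p (min p p') \<noteq> staircase k a' p' (min p p')"
      using a assms(4,5) by (auto simp: staircase_def min_def)
    then show False using eq by simp
  qed
  then show ?thesis using a by simp
qed

lemma matching_edges_disjoint:
  assumes "i < k" "i' < k" "i \<noteq> i'"
  shows "{staircase k (base_level i) i, staircase k (base_level i) (Suc i)}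
       \<inter> {staircase k (base_level i') i', staircase k (base_level i') (Suc i')} = {}"
proof (rule ccontr)
  assume "\<not> ?thesis"
  then obtain p p' where pp: "p = i \<or> p = Suc i" "p' = i' \<or> p' = Suc i'"
    "staircase k (base_level i) p = staircase k (base_level i') p'"
    by blast
  moreover have "0 < k" "p \<le> k" "p' \<le> k" using assms pp(1,2) by auto
  ultimately have "base_level i = base_level i' \<and> p = p'"
    using staircase_eq_imp[OF _ base_level_cases base_level_cases] by blast
  then have "even i = even i'" "p = p'" by (auto simp: base_level_def split: if_splits)
  then show False using pp(1,2) assms(3) by auto
qed

lemma parent_tree_tree_darts:
  assumes "j < k" shows "parent_tree (torus_on {..<k}) (dart_edge ` tree_darts k j)"
proof -
  have "\<forall>e\<in>set (map (carry k) (tree_dirs k j)). e < 4" by (auto simp: carry_def)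
  moreover have "base_level (Suc j mod k) < 4" by (simp add: base_level_def)
  ultimately show ?thesis
    using parent_tree_chain_darts[OF distinct_tree_dirs[OF assms]] set_tree_dirs[OF assms]
    by (simp add: tree_darts_def)
qed

lemma spanning_tree_tree_darts:
  assumes "j < k"
  shows "spanning_tree (hc_verts (2*k)) (hc_edges (2*k)) (cube_edge k ` tree_darts k j)"
proof (rule spanning_tree_if_parent_tree)
  show "parent_tree (hc_verts (2*k)) (cube_edge k ` tree_darts k j)"
    using parent_tree_image[OF bij_betw_gray_enc parent_tree_tree_darts[OF assms]]
    by (simp add: image_image cube_edge_def)
  show "cube_edge k ` tree_darts k j \<subseteq> hc_edges (2*k)"
    using tree_darts_subset[OF assms] cube_edge_in_hc_edges by blast
qed

lemma cube_edge_matching_dart: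
  "i < k \<Longrightarrow> cube_edge k (staircase k (base_level i) i, i)
     = gray_enc k ` {staircase k (base_level i) i, staircase k (base_level i) (Suc i)}"
  using rot_staircase base_level_cases[of i] by (auto simp: cube_edge_def dart_edge_def)

lemma matching_matching_darts: "matching (hc_edges (2*k)) (cube_edge k ` matching_darts k)"
  unfolding matching_def
proof (intro conjI ballI impI)
  show "cube_edge k ` matching_darts k \<subseteq> hc_edges (2*k)"
    using matching_darts_subset cube_edge_in_hc_edges by blast
next
  fix e e' assume "e \<in> cube_edge k ` matching_darts k" "e' \<in> cube_edge k ` matching_darts k" "e \<noteq> e'"
  then obtain i i' where i: "i < k" "i' < k" "i \<noteq> i'"
    and e: "e = cube_edge k (staircase k (base_level i) i, i)"
    and e': "e' = cube_edge k (staircase k (base_level i') i', i')"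
    unfolding matching_darts_eq by auto
  have "\<forall>i. staircase k (base_level i) i \<in> torus_on {..<k}
      \<and> staircase k (base_level i) (Suc i) \<in> torus_on {..<k}"
    using staircase_in_torus base_level_cases by (metis eq_refl zero_le)
  then show "e \<inter> e' = {}"
    unfolding e e' cube_edge_matching_dart[OF i(1)] cube_edge_matching_dart[OF i(2)]
    using inj_on_image_Int[OF bij_betw_imp_inj_on[OF bij_betw_gray_enc]] matching_edges_disjoint[OF i]
    by (metis empty_subsetI image_empty insert_subset)
qed

lemma card_matching_darts: "card (cube_edge k ` matching_darts k) = k"
proof -
  have "card (cube_edge k ` matching_darts k) = card (matching_darts k)"
    using inj_on_subset[OF inj_on_cube_edge matching_darts_subset] by (rule card_image)
  also have "\<dots> = card {..<k}"
    unfolding matching_darts_eq by (rule card_image) (auto intro: inj_onI)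
  finally show ?thesis by simp
qed

theorem mainTheorem3:
  fixes k :: nat
  assumes "k \<ge> 1"
  shows "\<exists>T :: nat \<Rightarrow> bool list set set. \<exists>M.
           (\<forall>i<k. spanning_tree (hc_verts (2*k)) (hc_edges (2*k)) (T i))
         \<and> (\<forall>i<k. \<forall>j<k. i \<noteq> j \<longrightarrow> T i \<inter> T j = {})
         \<and> matching (hc_edges (2*k)) M \<and> card M = k
         \<and> (\<forall>i<k. T i \<inter> M = {})
         \<and> (\<Union>i<k. T i) \<union> M = hc_edges (2*k)"
proof (intro exI conjI allI impI)
  \<comment> \<open>The construction also covers k = 0.\<close>
  let ?T = "\<lambda>j. cube_edge k ` tree_darts k j" and ?M = "cube_edge k ` matching_darts k"
  note image_Int = inj_on_image_Int[OF inj_on_cube_edge, symmetric]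
  show "spanning_tree (hc_verts (2*k)) (hc_edges (2*k)) (?T j)" if "j < k" for j
    using spanning_tree_tree_darts[OF that] .
  show "?T i \<inter> ?T j = {}" if "i < k" "j < k" "i \<noteq> j" for i j
    using image_Int[OF tree_darts_subset tree_darts_subset] tree_darts_disjoint that by simp
  show "matching (hc_edges (2*k)) ?M" by (rule matching_matching_darts)
  show "card ?M = k" by (rule card_matching_darts)
  show "?T j \<inter> ?M = {}" if "j < k" for j
    using image_Int[OF tree_darts_subset matching_darts_subset] tree_darts_matching_darts_disjoint that
    by simp
  show "(\<Union>j<k. ?T j) \<union> ?M = hc_edges (2*k)"
    unfolding hc_edges_eq darts_eq_Un by (simp add: image_Un image_UN)
qed

end
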